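(* Assume no two of $\bm u_1,\dots,\bm u_m$ are parallel. Let $\bm a,\bm b\in\mathbb{R}^m$ be such that $\mathcal{A}_{\bm a}$ and $\mathcal{A}_{\bm b}$ are normally equivalent. Then for each $i\in[m]$, the arrangements $\mathcal{A}_{\bm a}\setminus\{H_{\bm u_i,a_i}\}$ and $\mathcal{A}_{\bm b}\setminus\{H_{\bm u_i,b_i}\}$ are normally equivalent.
   Context: Fix nonzero $\bm u_1,\dots,\bm u_m\in\mathbb{R}^n$; $H_{\bm u,a}=\{\bm x:\langle\bm u,\bm x\rangle=a\}$; $\mathcal{A}_{\bm a}=\{H_{\bm u_i,a_i}:i\in[m]\}$. Faces of an arrangement: closures of the nonempty sets of points with a common sign vector; $\mathcal{F}(\mathcal{A})$ is the set of faces ordered by inclusion. For a nonempty convex polyhedron $P$: $h_P(\bm u)=\sup_{\bm x\in P}\langle\bm u,\bm x\rangle$, $N_P(\bm x)=\{\bm u:\langle\bm u,\bm x\rangle=h_P(\bm u)\}$, $N_P(G)=N_P(\bm x)$ for $\bm x\in\operatorname{relint}(G)$, normal fan $\mathcal{N}(P)=\{N_P(G)\}$; $P,Q$ normally equivalent iff $\mathcal{N}(P)=\mathcal{N}(Q)$. Arrangements $\mathcal{A},\mathcal{A}'$ in $\mathbb{R}^n$ are normally equivalent if there is an order-preserving bijection $\Psi:\mathcal{F}(\mathcal{A})\to\mathcal{F}(\mathcal{A}')$ with $F,\Psi(F)$ normally equivalent for all faces $F$. *)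

theory Defs
  imports "HOL-Analysis.Analysis"
begin

definition hyperplane :: "'a::euclidean_space \<Rightarrow> real \<Rightarrow> 'a set" where
  "hyperplane u a = {x. u \<bullet> x = a}"

text \<open>An arrangement is a finite set of hyperplanes, each given by its defining pair (u, a),
  i.e. the hyperplane H_{u,a}.  The sign vector of x records sgn(u.x - a) for each member.\<close>
definition sign_vector :: "('a::euclidean_space \<times> real) set \<Rightarrow> 'a \<Rightarrow> ('a \<times> real \<Rightarrow> real)" where
  "sign_vector A x = (\<lambda>p. if p \<in> A then sgn (fst p \<bullet> x - snd p) else 0)"

definition arr_faces :: "('a::euclidean_space \<times> real) set \<Rightarrow> 'a set set" where
  "arr_faces A = {closure {y. sign_vector A y = s} | s. {y. sign_vector A y = s} \<noteq> {}}"

text \<open>The arrangement A_a = {H_{u_i,a_i} : i in [m]}, with [m] rendered as {..<m}.\<close>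
definition arrangement :: "nat \<Rightarrow> (nat \<Rightarrow> 'a::euclidean_space) \<Rightarrow> (nat \<Rightarrow> real) \<Rightarrow> ('a \<times> real) set" where
  "arrangement m u a = (\<lambda>i. (u i, a i)) ` {..<m}"

text \<open>Support function h_P (extended-real valued, since P may be unbounded).\<close>
definition support_fun :: "'a::euclidean_space set \<Rightarrow> 'a \<Rightarrow> ereal" where
  "support_fun P u = (SUP x\<in>P. ereal (u \<bullet> x))"

definition normal_cone :: "'a::euclidean_space set \<Rightarrow> 'a \<Rightarrow> 'a set" where
  "normal_cone P x = {u. ereal (u \<bullet> x) = support_fun P u}"

definition normal_cone_face :: "'a::euclidean_space set \<Rightarrow> 'a set \<Rightarrow> 'a set" where
  "normal_cone_face P G = normal_cone P (SOME x. x \<in> rel_interior G)"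

definition normal_fan :: "'a::euclidean_space set \<Rightarrow> 'a set set" where
  "normal_fan P = {normal_cone_face P G | G. G face_of P \<and> G \<noteq> {}}"

definition normally_equivalent :: "'a::euclidean_space set \<Rightarrow> 'a set \<Rightarrow> bool" where
  "normally_equivalent P Q \<longleftrightarrow> normal_fan P = normal_fan Q"

definition arr_normally_equivalent ::
  "('a::euclidean_space \<times> real) set \<Rightarrow> ('a \<times> real) set \<Rightarrow> bool" where
  "arr_normally_equivalent A B \<longleftrightarrow>
     (\<exists>\<Psi>. bij_betw \<Psi> (arr_faces A) (arr_faces B)
        \<and> (\<forall>F\<in>arr_faces A. \<forall>G\<in>arr_faces A. F \<subseteq> G \<longrightarrow> \<Psi> F \<subseteq> \<Psi> G)
        \<and> (\<forall>F\<in>arr_faces A. normally_equivalent F (\<Psi> F)))"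

end

theory Submission
  imports Defs
begin

text \<open>
  The faces of an arrangement with normals u and offsets a are indexed by its covectors, the sign
  vectors that are realised by points, and an order-preserving bijection of faces becomes an
  order-preserving bijection \<pi> of covectors. The normal fan of a face records the hyperplanes
  containing it and, for a chamber, all of its faces. As no two normals are parallel, \<pi> therefore
  maps chambers to chambers and facets on the k-th hyperplane to facets on the k-th hyperplane, and
  the outer normal of a chamber along such a facet shows that \<pi> keeps the k-th sign of the chamber.
  Walking between adjacent chambers, the set of coordinates flipped by \<pi> stays the same, so it is
  empty and \<pi> fixes every chamber. Counting the pairs (face, chamber above it) in two ways then
  shows that \<pi> preserves the set of chambers above each covector, which determines the covector.
  Hence normally equivalent arrangements have the same covectors, the converse being clear, and
  deleting the i-th hyperplane just forgets the i-th coordinate of every covector.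
\<close>

definition sign_le :: "(nat \<Rightarrow> real) \<Rightarrow> (nat \<Rightarrow> real) \<Rightarrow> bool" where
  "sign_le s r \<longleftrightarrow> (\<forall>j. s j = 0 \<or> s j = r j)"

lemma sign_le_refl: "sign_le s s"
  by (simp add: sign_le_def)

lemma sign_le_trans: "sign_le s r \<Longrightarrow> sign_le r q \<Longrightarrow> sign_le s q"
  unfolding sign_le_def by metis

lemma sign_le_antisym: "sign_le s r \<Longrightarrow> sign_le r s \<Longrightarrow> s = r"
  unfolding sign_le_def by (metis ext)

definition compose_signs :: "(nat \<Rightarrow> real) \<Rightarrow> (nat \<Rightarrow> real) \<Rightarrow> nat \<Rightarrow> real" where
  "compose_signs s r = (\<lambda>j. if s j \<noteq> 0 then s j else r j)"

lemma sign_le_compose_signs: "sign_le s (compose_signs s r)"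
  by (simp add: sign_le_def compose_signs_def)

lemma sgn_mult_self: "sgn (v::real) * v = \<bar>v\<bar>"
  by (simp add: sgn_if)

lemma eventually_at_right_0_obtain:
  assumes "eventually P (at_right (0::real))"
  obtains e where "e > 0" "P e"
proof -
  have "eventually (\<lambda>e. e > 0 \<and> P e) (at_right (0::real))"
    using eventually_conj[OF eventually_at_right_less assms] by simp
  then show ?thesis using that eventually_happens' trivial_limit_at_right_real by blast
qed

lemma sum_card_filter_swap:
  assumes "finite X" "finite Y"
  shows "(\<Sum>x\<in>X. card {y\<in>Y. R x y}) = (\<Sum>y\<in>Y. card {x\<in>X. R x y})"
proof -
  have "(\<Sum>x\<in>X. card {y\<in>Y. R x y}) = (\<Sum>x\<in>X. \<Sum>y\<in>Y. if R x y then 1 else 0)"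
    using assms by (simp add: sum.inter_filter[symmetric])
  also have "\<dots> = (\<Sum>y\<in>Y. \<Sum>x\<in>X. if R x y then 1 else 0)"
    by (rule sum.swap)
  also have "\<dots> = (\<Sum>y\<in>Y. card {x\<in>X. R x y})"
    using assms by (simp add: sum.inter_filter[symmetric])
  finally show ?thesis .
qed

lemma normal_cone_iff:
  assumes "x \<in> P"
  shows "v \<in> normal_cone P x \<longleftrightarrow> (\<forall>y\<in>P. v \<bullet> y \<le> v \<bullet> x)"
proof
  assume "v \<in> normal_cone P x"
  then have "ereal (v \<bullet> y) \<le> ereal (v \<bullet> x)" if "y \<in> P" for y
    using that unfolding normal_cone_def support_fun_def by (metis (mono_tags) SUP_upper mem_Collect_eq)
  then show "\<forall>y\<in>P. v \<bullet> y \<le> v \<bullet> x" by simp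
next
  assume "\<forall>y\<in>P. v \<bullet> y \<le> v \<bullet> x"
  then have "support_fun P v \<le> ereal (v \<bullet> x)"
    unfolding support_fun_def by (intro SUP_least) simp
  moreover have "ereal (v \<bullet> x) \<le> support_fun P v"
    unfolding support_fun_def using assms by (rule SUP_upper)
  ultimately show "v \<in> normal_cone P x" by (simp add: normal_cone_def)
qed

definition polar :: "'a::real_inner set \<Rightarrow> 'a set" where
  "polar C = {v. \<forall>d\<in>C. v \<bullet> d \<le> 0}"

lemma polar_antimono: "C \<subseteq> D \<Longrightarrow> polar D \<subseteq> polar C"
  by (auto simp: polar_def)

lemma polar_UNIV: "polar UNIV = {0}"
  by (auto simp: polar_def) (metis inner_eq_zero_iff inner_ge_zero order_antisym)

lemma parallel_if_polar_orthogonal: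
  fixes v w :: "'a::real_inner"
  assumes "\<And>d. w \<bullet> d = 0 \<Longrightarrow> v \<bullet> d \<le> 0"
  shows "\<exists>c. v = c *\<^sub>R w"
proof -
  define c where "c = (v \<bullet> w) / (w \<bullet> w)"
  define p where "p = v - c *\<^sub>R w"
  have wp: "w \<bullet> p = 0"
    by (cases "w = 0") (simp_all add: p_def c_def inner_diff_right inner_commute)
  then have "v \<bullet> p \<le> 0" using assms[of p] by (simp add: inner_commute)
  moreover have "p \<bullet> p = v \<bullet> p"
    using wp unfolding p_def by (simp add: inner_diff_left)
  ultimately have "p = 0" by (metis inner_eq_zero_iff inner_ge_zero order_antisym)
  then show ?thesis by (auto simp: p_def)
qed

lemma nonpos_multiple_if_polar_halfspace:
  fixes v w :: "'a::real_inner"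
  assumes h: "\<And>d. 0 \<le> w \<bullet> d \<Longrightarrow> v \<bullet> d \<le> 0"
  shows "\<exists>c\<ge>0. v = (- c) *\<^sub>R w"
proof -
  obtain c where c: "v = c *\<^sub>R w"
    using parallel_if_polar_orthogonal[of w v] h by force
  have "c * (w \<bullet> w) \<le> 0" using h[of w] c by simp
  then have "c \<le> 0 \<or> w \<bullet> w \<le> 0" by (auto simp: mult_le_0_iff)
  then have "w = 0 \<or> c \<le> 0" by (metis inner_eq_zero_iff inner_ge_zero order_antisym)
  then show ?thesis
    using c by (cases "w = 0") (auto intro: exI[of _ 0] exI[of _ "- c"])
qed

lemma exists_orthogonal_avoiding:
  fixes v :: "'a::real_inner"
  assumes "finite S" "\<And>w. w \<in> S \<Longrightarrow> \<exists>e. e \<bullet> v = 0 \<and> e \<bullet> w \<noteq> 0"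
  shows "\<exists>d. d \<bullet> v = 0 \<and> (\<forall>w\<in>S. d \<bullet> w \<noteq> 0)"
  using assms
proof (induction S rule: finite_induct)
  case empty
  show ?case by (intro exI[of _ 0]) simp
next
  case (insert w S)
  then obtain d where d: "d \<bullet> v = 0" "\<forall>w\<in>S. d \<bullet> w \<noteq> 0" by auto
  obtain e where e: "e \<bullet> v = 0" "e \<bullet> w \<noteq> 0" using insert.prems by auto
  define B where "B = (\<lambda>w'. - (d \<bullet> w') / (e \<bullet> w')) ` insert w S"
  have "finite B" using insert.hyps by (simp add: B_def)
  then obtain c where c: "c \<notin> B" using ex_new_if_finite[of B] infinite_UNIV_char_0 by auto
  \<comment> \<open>c avoids every value at which d + c e would become orthogonal to a vector of insert w S\<close>
  have "(d + c *\<^sub>R e) \<bullet> w' \<noteq> 0" if w': "w' \<in> insert w S" for w'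
  proof
    assume "(d + c *\<^sub>R e) \<bullet> w' = 0"
    then have z: "d \<bullet> w' + c * (e \<bullet> w') = 0" by (simp add: inner_add_left)
    show False
    proof (cases "e \<bullet> w' = 0")
      case True
      then show False using e d z w' by auto
    next
      case False
      then have "c = - (d \<bullet> w') / (e \<bullet> w')" using z by (simp add: field_simps)
      then show False using c w' by (auto simp: B_def)
    qed
  qed
  moreover have "(d + c *\<^sub>R e) \<bullet> v = 0" using d e by (simp add: inner_add_left)
  ultimately show ?case by blast
qed

section \<open>Faces of an arrangement and their normal fans\<close>

locale hyperplane_family =
  fixes u :: "nat \<Rightarrow> 'a::euclidean_space" and J :: "nat set"
  assumes finite_J: "finite J"
begin

definition hyperplanes :: "(nat \<Rightarrow> real) \<Rightarrow> ('a \<times> real) set" where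
  "hyperplanes a = (\<lambda>j. (u j, a j)) ` J"

definition signs :: "(nat \<Rightarrow> real) \<Rightarrow> 'a \<Rightarrow> nat \<Rightarrow> real" where
  "signs a x = (\<lambda>j. if j \<in> J then sgn (u j \<bullet> x - a j) else 0)"

definition covectors :: "(nat \<Rightarrow> real) \<Rightarrow> (nat \<Rightarrow> real) set" where
  "covectors a = range (signs a)"

definition zeros :: "(nat \<Rightarrow> real) \<Rightarrow> nat set" where
  "zeros s = {j\<in>J. s j = 0}"

definition chambers_above :: "(nat \<Rightarrow> real) \<Rightarrow> (nat \<Rightarrow> real) \<Rightarrow> (nat \<Rightarrow> real) set" where
  "chambers_above a s = {t \<in> covectors a. zeros t = {} \<and> sign_le s t}"

definition cell :: "(nat \<Rightarrow> real) \<Rightarrow> (nat \<Rightarrow> real) \<Rightarrow> 'a set" where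
  "cell a s = {x. signs a x = s}"

definition face :: "(nat \<Rightarrow> real) \<Rightarrow> (nat \<Rightarrow> real) \<Rightarrow> 'a set" where
  "face a s = closure (cell a s)"

definition closed_cell :: "(nat \<Rightarrow> real) \<Rightarrow> (nat \<Rightarrow> real) \<Rightarrow> 'a set" where
  "closed_cell a s = {x. \<forall>j\<in>J. (s j = 0 \<longrightarrow> u j \<bullet> x = a j) \<and> (s j \<noteq> 0 \<longrightarrow> 0 \<le> s j * (u j \<bullet> x - a j))}"

text \<open>The directions d such that x + e d stays in face s for small e > 0, when x has signs r.\<close>
definition feasible_directions :: "(nat \<Rightarrow> real) \<Rightarrow> (nat \<Rightarrow> real) \<Rightarrow> 'a set" where
  "feasible_directions s r =
     {d. \<forall>j\<in>J. (s j = 0 \<longrightarrow> d \<bullet> u j = 0) \<and> (r j = 0 \<and> s j \<noteq> 0 \<longrightarrow> 0 \<le> s j * (d \<bullet> u j))}"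

lemma covectors_outside: "s \<in> covectors a \<Longrightarrow> j \<notin> J \<Longrightarrow> s j = 0"
  by (auto simp: covectors_def signs_def)

lemma covectors_values: "s \<in> covectors a \<Longrightarrow> s j = 0 \<or> s j = 1 \<or> s j = -1"
  by (cases "j \<in> J") (auto simp: covectors_def signs_def sgn_if split: if_splits)

lemma covectors_nonzero: "s \<in> covectors a \<Longrightarrow> s j \<noteq> 0 \<Longrightarrow> s j = 1 \<or> s j = -1"
  using covectors_values by blast

lemma signs_eq_zero_iff: "j \<in> J \<Longrightarrow> signs a x j = 0 \<longleftrightarrow> u j \<bullet> x = a j"
  by (simp add: signs_def sgn_eq_0_iff)

lemma signs_eq_pm_iff:
  "j \<in> J \<Longrightarrow> c = 1 \<or> c = -1 \<Longrightarrow> signs a x j = c \<longleftrightarrow> 0 < c * (u j \<bullet> x - a j)"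
  by (auto simp: signs_def sgn_if zero_less_mult_iff)

lemma signs_mem_covectors [simp]: "signs a x \<in> covectors a"
  by (simp add: covectors_def)

lemma closed_closed_cell: "closed (closed_cell a s)"
proof -
  have "closed {x. (s j = 0 \<longrightarrow> u j \<bullet> x = a j) \<and> (s j \<noteq> 0 \<longrightarrow> 0 \<le> s j * (u j \<bullet> x - a j))}" for j
    by (cases "s j = 0") (simp_all add: closed_hyperplane closed_Collect_le continuous_intros)
  moreover have "closed_cell a s =
      (\<Inter>j\<in>J. {x. (s j = 0 \<longrightarrow> u j \<bullet> x = a j) \<and> (s j \<noteq> 0 \<longrightarrow> 0 \<le> s j * (u j \<bullet> x - a j))})"
    by (auto simp: closed_cell_def)
  ultimately show ?thesis by auto
qed

lemma convex_closed_cell: "convex (closed_cell a s)"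
  unfolding convex_alt
proof (intro ballI allI impI)
  fix x y and t::real assume x: "x \<in> closed_cell a s" and y: "y \<in> closed_cell a s" and t: "0 \<le> t \<and> t \<le> 1"
  show "(1 - t) *\<^sub>R x + t *\<^sub>R y \<in> closed_cell a s" unfolding closed_cell_def
  proof (intro CollectI ballI conjI impI)
    fix j assume j: "j \<in> J"
    have e: "u j \<bullet> ((1 - t) *\<^sub>R x + t *\<^sub>R y) - a j = (1-t) * (u j \<bullet> x - a j) + t * (u j \<bullet> y - a j)"
      by (simp add: inner_add_right algebra_simps)
    show "u j \<bullet> ((1 - t) *\<^sub>R x + t *\<^sub>R y) = a j" if "s j = 0"
      using x y j that by (auto simp: closed_cell_def inner_add_right algebra_simps)
    show "0 \<le> s j * (u j \<bullet> ((1 - t) *\<^sub>R x + t *\<^sub>R y) - a j)" if "s j \<noteq> 0"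
    proof -
      have "0 \<le> s j * (u j \<bullet> x - a j)" "0 \<le> s j * (u j \<bullet> y - a j)"
        using x y j that by (auto simp: closed_cell_def)
      then have "0 \<le> (1-t) * (s j * (u j \<bullet> x - a j)) + t * (s j * (u j \<bullet> y - a j))"
        using t by (metis add_nonneg_nonneg diff_ge_0_iff_ge mult_nonneg_nonneg)
      then show ?thesis by (simp add: e algebra_simps)
    qed
  qed
qed

lemma cell_subset_closed_cell: "cell a s \<subseteq> closed_cell a s"
  by (auto simp: cell_def closed_cell_def signs_def sgn_eq_0_iff sgn_mult_self)

lemma open_segment_subset_cell:
  assumes x: "x \<in> cell a s" and y: "y \<in> closed_cell a s"
  shows "open_segment y x \<subseteq> cell a s"
proof
  fix p assume "p \<in> open_segment y x"
  then obtain t where t: "0 < t" "t < 1" and p: "p = (1 - t) *\<^sub>R y + t *\<^sub>R x"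
    by (auto simp: in_segment)
  have "signs a p j = s j" for j
  proof (cases "j \<in> J")
    case False
    then show ?thesis using x by (auto simp: cell_def signs_def)
  next
    case j: True
    have up: "u j \<bullet> p - a j = (1 - t) * (u j \<bullet> y - a j) + t * (u j \<bullet> x - a j)"
      by (simp add: p inner_add_right algebra_simps)
    show ?thesis
    proof (cases "s j = 0")
      case True
      then have "u j \<bullet> y = a j" "u j \<bullet> x = a j"
        using y x j by (auto simp: closed_cell_def cell_def signs_eq_zero_iff)
      then show ?thesis using True j up by (simp add: signs_def)
    next
      case False
      have sj: "s j = 1 \<or> s j = -1" and "signs a x j = s j"
        using x False covectors_nonzero[of s a j] by (auto simp: cell_def covectors_def)
      then have "0 < s j * (u j \<bullet> x - a j)" using j signs_eq_pm_iff by blast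
      moreover have "0 \<le> s j * (u j \<bullet> y - a j)" using y j False by (auto simp: closed_cell_def)
      ultimately have "0 < (1 - t) * (s j * (u j \<bullet> y - a j)) + t * (s j * (u j \<bullet> x - a j))"
        using t by (simp add: add_nonneg_pos)
      then show ?thesis using j sj by (simp add: signs_eq_pm_iff up algebra_simps)
    qed
  qed
  then show "p \<in> cell a s" by (auto simp: cell_def)
qed

lemma face_eq_closed_cell:
  assumes "s \<in> covectors a"
  shows "face a s = closed_cell a s"
proof
  show "face a s \<subseteq> closed_cell a s"
    unfolding face_def using cell_subset_closed_cell closed_closed_cell by (rule closure_minimal)
  obtain x where x: "x \<in> cell a s" using assms by (auto simp: covectors_def cell_def)
  show "closed_cell a s \<subseteq> face a s"
  proof
    fix y assume y: "y \<in> closed_cell a s"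
    show "y \<in> face a s"
    proof (cases "y = x")
      case True
      then show ?thesis using x closure_subset unfolding face_def by blast
    next
      case False
      have "closure (open_segment y x) \<subseteq> face a s"
        unfolding face_def using open_segment_subset_cell[OF x y] by (rule closure_mono)
      then show ?thesis using False by auto
    qed
  qed
qed

lemma mem_face_iff:
  assumes "s \<in> covectors a"
  shows "x \<in> face a s \<longleftrightarrow> sign_le (signs a x) s"
proof -
  have "x \<in> closed_cell a s \<longleftrightarrow> sign_le (signs a x) s"
    unfolding closed_cell_def sign_le_def
  proof safe
    fix j assume h: "\<forall>j\<in>J. (s j = 0 \<longrightarrow> u j \<bullet> x = a j) \<and> (s j \<noteq> 0 \<longrightarrow> 0 \<le> s j * (u j \<bullet> x - a j))"
      and ne: "signs a x j \<noteq> s j"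
    show "signs a x j = 0"
    proof (cases "j \<in> J")
      case True
      then show ?thesis using h ne covectors_values[OF assms, of j]
        by (auto simp: signs_def sgn_if zero_le_mult_iff split: if_splits)
    qed (simp add: signs_def)
  next
    fix j assume "\<forall>j. signs a x j = 0 \<or> signs a x j = s j" "j \<in> J" "s j = 0"
    then show "u j \<bullet> x = a j" by (metis signs_eq_zero_iff)
  next
    fix j assume h: "\<forall>j. signs a x j = 0 \<or> signs a x j = s j" and j: "j \<in> J" "s j \<noteq> 0"
    then have "sgn (u j \<bullet> x - a j) = 0 \<or> sgn (u j \<bullet> x - a j) = s j" by (metis signs_def)
    then show "0 \<le> s j * (u j \<bullet> x - a j)"
      using sgn_mult_self[of "u j \<bullet> x - a j"] by (auto simp: sgn_eq_0_iff)
  qed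
  then show ?thesis using face_eq_closed_cell[OF assms] by simp
qed

lemma mem_face_signs: "x \<in> face a (signs a x)"
  by (simp add: mem_face_iff sign_le_refl)

lemma face_subset_face_iff:
  assumes "s \<in> covectors a" "r \<in> covectors a"
  shows "face a s \<subseteq> face a r \<longleftrightarrow> sign_le s r"
proof
  assume h: "face a s \<subseteq> face a r"
  obtain x where x: "signs a x = s" using assms by (auto simp: covectors_def)
  then have "x \<in> face a s" using assms mem_face_iff sign_le_refl by blast
  then show "sign_le s r" using h mem_face_iff[OF assms(2)] x by auto
next
  assume "sign_le s r"
  then show "face a s \<subseteq> face a r" using mem_face_iff assms sign_le_trans by blast
qed

lemma inj_on_face: "inj_on (face a) (covectors a)"
  by (intro inj_onI sign_le_antisym) (simp_all add: face_subset_face_iff[symmetric])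

lemma eventually_signs_stable:
  "eventually (\<lambda>e. \<forall>j. signs a x j \<noteq> 0 \<longrightarrow> signs a (x + e *\<^sub>R v) j = signs a x j) (at_right (0::real))"
proof -
  have "eventually (\<lambda>e. signs a x j \<noteq> 0 \<longrightarrow> signs a (x + e *\<^sub>R v) j = signs a x j) (at_right 0)"
    if j: "j \<in> J" for j
  proof -
    have lim: "((\<lambda>e. u j \<bullet> (x + e *\<^sub>R v) - a j) \<longlongrightarrow> u j \<bullet> x - a j) (at_right (0::real))"
      by (rule tendsto_eq_intros refl | simp)+
    consider "u j \<bullet> x - a j > 0" | "u j \<bullet> x - a j < 0" | "u j \<bullet> x - a j = 0" by linarith
    then show ?thesis
    proof cases
      case 1
      show ?thesis using order_tendstoD(1)[OF lim 1]
        by eventually_elim (use 1 j in \<open>simp add: signs_def\<close>)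
    next
      case 2
      show ?thesis using order_tendstoD(2)[OF lim 2]
        by eventually_elim (use 2 j in \<open>simp add: signs_def\<close>)
    qed (use j in \<open>simp add: signs_def\<close>)
  qed
  then have "eventually (\<lambda>e. \<forall>j\<in>J. signs a x j \<noteq> 0 \<longrightarrow> signs a (x + e *\<^sub>R v) j = signs a x j) (at_right 0)"
    using finite_J by (simp add: eventually_ball_finite)
  then show ?thesis by eventually_elim (auto simp: signs_def)
qed

lemma eventually_signs_perturb:
  "eventually (\<lambda>e. signs a (x + e *\<^sub>R v) = compose_signs (signs a x) (signs (\<lambda>_. 0) v)) (at_right (0::real))"
  using eventually_conj[OF eventually_signs_stable[of a x v] eventually_at_right_less[of 0]]
proof eventually_elim
  case (elim e)
  have "signs a (x + e *\<^sub>R v) j = compose_signs (signs a x) (signs (\<lambda>_. 0) v) j" for j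
  proof (cases "j \<in> J \<and> signs a x j = 0")
    case True
    then have "u j \<bullet> x = a j" using signs_eq_zero_iff by blast
    then have "u j \<bullet> (x + e *\<^sub>R v) - a j = e * (u j \<bullet> v)"
      by (simp add: inner_add_right)
    then show ?thesis using True elim by (auto simp: signs_def compose_signs_def sgn_mult)
  qed (use elim in \<open>auto simp: compose_signs_def signs_def\<close>)
  then show ?case by blast
qed

lemma exists_signs_perturb:
  obtains e where "e > 0" "signs a (x + e *\<^sub>R v) = compose_signs (signs a x) (signs (\<lambda>_. 0) v)"
  using eventually_at_right_0_obtain[OF eventually_signs_perturb] by blast

lemma diff_mem_feasible_directions:
  assumes s: "s \<in> covectors a" and x: "x \<in> face a s" and y: "y \<in> face a s"
  shows "y - x \<in> feasible_directions s (signs a x)"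
  unfolding feasible_directions_def
proof (intro CollectI ballI conjI impI)
  fix j assume j: "j \<in> J"
  have xc: "x \<in> closed_cell a s" and yc: "y \<in> closed_cell a s"
    using x y face_eq_closed_cell[OF s] by auto
  have diff: "(y - x) \<bullet> u j = (u j \<bullet> y - a j) - (u j \<bullet> x - a j)"
    by (simp add: inner_diff_left inner_diff_right inner_commute)
  show "(y - x) \<bullet> u j = 0" if "s j = 0"
    using xc yc j that by (simp add: diff closed_cell_def)
  show "0 \<le> s j * ((y - x) \<bullet> u j)" if "signs a x j = 0 \<and> s j \<noteq> 0"
    using yc j that signs_eq_zero_iff[of j a x] by (simp add: diff closed_cell_def)
qed

lemma add_feasible_direction_mem_face:
  assumes s: "s \<in> covectors a" and x: "x \<in> face a s" and d: "d \<in> feasible_directions s (signs a x)"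
  obtains e where "e > 0" "x + e *\<^sub>R d \<in> face a s"
proof -
  obtain e where e: "e > 0" "signs a (x + e *\<^sub>R d) = compose_signs (signs a x) (signs (\<lambda>_. 0) d)"
    using exists_signs_perturb by blast
  have le: "sign_le (signs a x) s" using x mem_face_iff[OF s] by simp
  have "compose_signs (signs a x) (signs (\<lambda>_. 0) d) j = 0 \<or>
      compose_signs (signs a x) (signs (\<lambda>_. 0) d) j = s j" for j
  proof (cases "j \<in> J \<and> signs a x j = 0")
    case True
    then have "compose_signs (signs a x) (signs (\<lambda>_. 0) d) j = signs (\<lambda>_. 0) d j"
      by (simp add: compose_signs_def)
    also have "\<dots> = sgn (d \<bullet> u j)" using True by (simp add: signs_def inner_commute)
    moreover have "s j = 0 \<longrightarrow> d \<bullet> u j = 0" "s j \<noteq> 0 \<longrightarrow> 0 \<le> s j * (d \<bullet> u j)"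
      using d True by (auto simp: feasible_directions_def)
    ultimately show ?thesis
      using covectors_nonzero[OF s, of j] by (auto simp: sgn_if zero_le_mult_iff)
  qed (use le in \<open>auto simp: compose_signs_def sign_le_def signs_def[of "\<lambda>_. 0"]\<close>)
  then show ?thesis using that e mem_face_iff[OF s] by (simp add: sign_le_def)
qed

lemma normal_cone_face:
  assumes s: "s \<in> covectors a" and x: "x \<in> face a s"
  shows "normal_cone (face a s) x = polar (feasible_directions s (signs a x))"
proof (intro set_eqI iffI)
  fix v assume v: "v \<in> normal_cone (face a s) x"
  show "v \<in> polar (feasible_directions s (signs a x))" unfolding polar_def
  proof (intro CollectI ballI)
    fix d assume "d \<in> feasible_directions s (signs a x)"
    then obtain e where e: "e > 0" "x + e *\<^sub>R d \<in> face a s"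
      using add_feasible_direction_mem_face[OF s x] by blast
    then have "v \<bullet> (x + e *\<^sub>R d) \<le> v \<bullet> x" using v normal_cone_iff[OF x] by blast
    then show "v \<bullet> d \<le> 0" using e(1) by (simp add: inner_add_right mult_le_0_iff)
  qed
next
  fix v assume "v \<in> polar (feasible_directions s (signs a x))"
  then have "v \<bullet> (y - x) \<le> 0" if "y \<in> face a s" for y
    using diff_mem_feasible_directions[OF s x that] by (auto simp: polar_def)
  then show "v \<in> normal_cone (face a s) x"
    using normal_cone_iff[OF x] by (simp add: inner_diff_right)
qed

lemma face_eq_face_Int_hyperplanes:
  assumes r: "r \<in> covectors a" and s: "s \<in> covectors a" and rs: "sign_le r s"
  shows "face a r = face a s \<inter> {x. \<forall>j\<in>J. r j = 0 \<and> s j \<noteq> 0 \<longrightarrow> u j \<bullet> x = a j}"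
proof -
  have "(signs a x j = 0 \<or> signs a x j = r j) \<longleftrightarrow>
      (signs a x j = 0 \<or> signs a x j = s j) \<and> (j \<in> J \<and> r j = 0 \<and> s j \<noteq> 0 \<longrightarrow> signs a x j = 0)" for x j
    using rs covectors_outside[OF r, of j] unfolding sign_le_def
    by (cases "j \<in> J") (auto simp: signs_def)
  then have "sign_le (signs a x) r \<longleftrightarrow>
      sign_le (signs a x) s \<and> (\<forall>j\<in>J. r j = 0 \<and> s j \<noteq> 0 \<longrightarrow> signs a x j = 0)" for x
    unfolding sign_le_def by blast
  then show ?thesis using mem_face_iff[OF r] mem_face_iff[OF s] signs_eq_zero_iff by auto
qed

lemma face_of_face:
  assumes r: "r \<in> covectors a" and s: "s \<in> covectors a" and rs: "sign_le r s"
  shows "face a r face_of face a s"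
proof -
  define H where "H j = face a s \<inter> {x. (- s j *\<^sub>R u j) \<bullet> x = - s j * a j}" for j
  have convex: "convex (face a s)" using face_eq_closed_cell[OF s] convex_closed_cell by simp
  have faces: "H j face_of face a s" if "j \<in> J" for j
    unfolding H_def using convex
  proof (rule face_of_Int_supporting_hyperplane_le)
    fix x assume "x \<in> face a s"
    then have "s j = 0 \<or> 0 \<le> s j * (u j \<bullet> x - a j)"
      using that face_eq_closed_cell[OF s] by (auto simp: closed_cell_def)
    then show "(- s j *\<^sub>R u j) \<bullet> x \<le> - s j * a j" by (auto simp: algebra_simps)
  qed
  have "\<Inter> (insert (face a s) (H ` {j\<in>J. r j = 0 \<and> s j \<noteq> 0})) face_of face a s"
    by (rule face_of_Inter) (use faces face_of_refl[OF convex] in auto)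
  moreover have "face a r = \<Inter> (insert (face a s) (H ` {j\<in>J. r j = 0 \<and> s j \<noteq> 0}))"
    unfolding face_eq_face_Int_hyperplanes[OF r s rs] by (auto simp: H_def)
  ultimately show ?thesis by simp
qed

lemma signs_rel_interior_face:
  assumes r: "r \<in> covectors a" and y: "y \<in> rel_interior (face a r)"
  shows "signs a y = r"
proof (rule ccontr)
  assume ne: "signs a y \<noteq> r"
  have "y \<in> face a r" using y rel_interior_subset by blast
  then have "sign_le (signs a y) r" using mem_face_iff[OF r] by simp
  moreover obtain j where "signs a y j \<noteq> r j" using ne by blast
  ultimately have "signs a y j = 0" and rj: "r j \<noteq> 0" by (auto simp: sign_le_def)
  moreover have j: "j \<in> J" using rj covectors_outside[OF r] by blast
  ultimately have uy: "u j \<bullet> y = a j" using signs_eq_zero_iff by blast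
  obtain x where x: "signs a x = r" using r by (auto simp: covectors_def)
  have "y \<noteq> x" using x ne by auto
  obtain e where e: "e > 0" and ball: "ball y e \<inter> affine hull (face a r) \<subseteq> face a r"
    using y mem_rel_interior_ball by blast
  \<comment> \<open>moving from y slightly away from x stays in the face but flips the sign at j\<close>
  define d where "d = e / (2 * norm (y - x))"
  have d: "d > 0" using e \<open>y \<noteq> x\<close> by (simp add: d_def)
  define q where "q = (1 + d) *\<^sub>R y + (- d) *\<^sub>R x"
  have "x \<in> face a r" using mem_face_signs x by blast
  then have "q \<in> affine hull (face a r)"
    unfolding q_def using \<open>y \<in> face a r\<close>
    by (intro mem_affine[OF affine_affine_hull] hull_inc) simp_all
  moreover have "dist y q < e"
  proof -
    have "y - q = d *\<^sub>R (x - y)" by (simp add: q_def algebra_simps)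
    then have "dist y q = d * norm (y - x)"
      using d by (simp add: dist_norm norm_minus_commute)
    also have "\<dots> = e / 2" using \<open>y \<noteq> x\<close> by (simp add: d_def)
    finally show ?thesis using e by simp
  qed
  ultimately have "q \<in> face a r" using ball by auto
  then have "signs a q j = 0 \<or> signs a q j = r j"
    using mem_face_iff[OF r] by (simp add: sign_le_def)
  moreover have "u j \<bullet> q - a j = - d * (u j \<bullet> x - a j)"
    using uy by (simp add: q_def inner_add_right algebra_simps)
  then have "signs a q j = - r j" using j x d by (auto simp: signs_def sgn_mult)
  ultimately show False using rj by linarith
qed

lemma normal_cone_face_face:
  assumes r: "r \<in> covectors a" and s: "s \<in> covectors a" and rs: "sign_le r s"
  shows "normal_cone_face (face a s) (face a r) = polar (feasible_directions s r)"
proof -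
  obtain x where "signs a x = r" using r by (auto simp: covectors_def)
  then have "face a r \<noteq> {}" using mem_face_signs by blast
  then have "rel_interior (face a r) \<noteq> {}"
    using face_eq_closed_cell[OF r] convex_closed_cell by (simp add: rel_interior_eq_empty)
  then have y: "(SOME y. y \<in> rel_interior (face a r)) \<in> rel_interior (face a r)" (is "?y \<in> _")
    by (metis ex_in_conv someI_ex)
  have "face a r \<subseteq> face a s" using face_subset_face_iff[OF r s] rs by blast
  then have "?y \<in> face a s" using y rel_interior_subset by blast
  then show ?thesis
    using normal_cone_face[OF s] signs_rel_interior_face[OF r y]
    unfolding normal_cone_face_def by simp
qed

lemma normal_fan_face:
  assumes s: "s \<in> covectors a"
  shows "normal_fan (face a s) = (\<lambda>r. polar (feasible_directions s r)) ` {r \<in> covectors a. sign_le r s}"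
proof (intro set_eqI iffI)
  fix C assume "C \<in> normal_fan (face a s)"
  then obtain G where G: "G face_of face a s" "G \<noteq> {}" and C: "C = normal_cone_face (face a s) G"
    by (auto simp: normal_fan_def)
  have "rel_interior G \<noteq> {}" using G face_of_imp_convex rel_interior_eq_empty by blast
  then have "(SOME y. y \<in> rel_interior G) \<in> rel_interior G" by (metis ex_in_conv someI_ex)
  then have y: "(SOME y. y \<in> rel_interior G) \<in> face a s"
    using G(1) rel_interior_subset face_of_imp_subset by blast
  then have "C = polar (feasible_directions s (signs a (SOME y. y \<in> rel_interior G)))"
    using C normal_cone_face[OF s y] by (simp add: normal_cone_face_def)
  moreover have "sign_le (signs a (SOME y. y \<in> rel_interior G)) s" using y mem_face_iff[OF s] by simp
  ultimately show "C \<in> (\<lambda>r. polar (feasible_directions s r)) ` {r \<in> covectors a. sign_le r s}"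
    by auto
next
  fix C assume "C \<in> (\<lambda>r. polar (feasible_directions s r)) ` {r \<in> covectors a. sign_le r s}"
  then obtain r where r: "r \<in> covectors a" "sign_le r s" and C: "C = polar (feasible_directions s r)"
    by blast
  have "face a r face_of face a s" "face a r \<noteq> {}"
    using face_of_face[OF r(1) s r(2)] r(1) mem_face_signs by (auto simp: covectors_def)
  then show "C \<in> normal_fan (face a s)"
    unfolding normal_fan_def C normal_cone_face_face[OF r(1) s r(2), symmetric] by blast
qed

lemma feasible_directions_chamber: "zeros t = {} \<Longrightarrow> feasible_directions t t = UNIV"
  by (auto simp: feasible_directions_def zeros_def)

lemma Inter_normal_fan_face:
  assumes "s \<in> covectors a"
  shows "\<Inter> (normal_fan (face a s)) = polar (feasible_directions s s)"
proof -
  have "polar (feasible_directions s s) \<subseteq> polar (feasible_directions s r)" for r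
    by (rule polar_antimono) (auto simp: feasible_directions_def)
  then show ?thesis unfolding normal_fan_face[OF assms] using sign_le_refl assms by blast
qed

lemma normal_mem_polar: "j \<in> J \<Longrightarrow> s j = 0 \<Longrightarrow> u j \<in> polar (feasible_directions s r)"
  by (auto simp: feasible_directions_def polar_def inner_commute)

lemma outer_normal_mem_polar:
  "j \<in> J \<Longrightarrow> r j = 0 \<Longrightarrow> s j \<noteq> 0 \<Longrightarrow> (- s j) *\<^sub>R u j \<in> polar (feasible_directions s r)"
  by (auto simp: feasible_directions_def polar_def inner_commute)

lemma polar_facet_parallel:
  assumes "zeros s = {k}" "v \<in> polar (feasible_directions s s)"
  shows "\<exists>c. v = c *\<^sub>R u k"
proof (rule parallel_if_polar_orthogonal)
  fix d assume "u k \<bullet> d = 0"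
  then have "d \<in> feasible_directions s s"
    using assms(1) by (auto simp: feasible_directions_def zeros_def inner_commute)
  then show "v \<bullet> d \<le> 0" using assms(2) by (auto simp: polar_def)
qed

lemma sign_le_eq_if_zeros_eq:
  assumes "r \<in> covectors a" "r' \<in> covectors a" "sign_le r t" "sign_le r' t" "zeros r = zeros r'"
  shows "r = r'"
proof
  fix j
  show "r j = r' j"
  proof (cases "j \<in> J")
    case True
    then have "r j = 0 \<longleftrightarrow> r' j = 0" using assms(5) by (auto simp: zeros_def)
    then show ?thesis using assms(3,4) unfolding sign_le_def by metis
  next
    case False
    then show ?thesis using covectors_outside[OF assms(1)] covectors_outside[OF assms(2)] by simp
  qed
qed

text \<open>Within a chamber, the cone polar (feasible_directions t r) contains the outer normal of every
  hyperplane through the face r, so it determines the zero set of r.\<close>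
lemma zeros_subset_if_polar_eq:
  assumes t: "t \<in> covectors a" "zeros t = {}" and r: "r \<in> covectors a" "sign_le r t"
    and r': "r' \<in> covectors a" "sign_le r' t"
    and eq: "polar (feasible_directions t r) = polar (feasible_directions t r')"
  shows "zeros r \<subseteq> zeros r'"
proof
  fix j assume "j \<in> zeros r"
  then have j: "j \<in> J" and rj: "r j = 0" by (auto simp: zeros_def)
  have tj: "t j = 1 \<or> t j = -1" using t j covectors_nonzero by (auto simp: zeros_def)
  show "j \<in> zeros r'"
  proof (rule ccontr)
    assume "j \<notin> zeros r'"
    then have "r' j = t j" using j r'(2) by (auto simp: zeros_def sign_le_def)
    obtain y where y: "signs a y = r'" using r' by (auto simp: covectors_def)
    obtain z where z: "signs a z = r" using r by (auto simp: covectors_def)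
    have yf: "y \<in> face a t" and zf: "z \<in> face a t"
      using mem_face_iff[OF t(1)] y z r'(2) r(2) by auto
    have "(- t j) *\<^sub>R u j \<in> normal_cone (face a t) y"
      using outer_normal_mem_polar[of j r t, OF j rj] tj eq normal_cone_face[OF t(1) yf] y by auto
    then have "((- t j) *\<^sub>R u j) \<bullet> z \<le> ((- t j) *\<^sub>R u j) \<bullet> y"
      using normal_cone_iff[OF yf] zf by blast
    moreover have "u j \<bullet> z = a j" using z rj j signs_eq_zero_iff by blast
    ultimately have "\<not> 0 < t j * (u j \<bullet> y - a j)" by (simp add: algebra_simps)
    then show False using y \<open>r' j = t j\<close> j tj signs_eq_pm_iff by blast
  qed
qed

lemma card_normal_fan_chamber:
  assumes t: "t \<in> covectors a" "zeros t = {}"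
  shows "card (normal_fan (face a t)) = card {r \<in> covectors a. sign_le r t}"
proof -
  have "inj_on (\<lambda>r. polar (feasible_directions t r)) {r \<in> covectors a. sign_le r t}"
    using zeros_subset_if_polar_eq[OF t] sign_le_eq_if_zeros_eq
    by (intro inj_onI) (metis (no_types, lifting) mem_Collect_eq subset_antisym)
  then show ?thesis using normal_fan_face[OF t(1)] by (simp add: card_image)
qed

lemma polar_facet_in_chamber_ray:
  assumes t: "t \<in> covectors a" "zeros t = {}" and s: "sign_le s t" "zeros s = {k}"
    and v: "v \<in> polar (feasible_directions t s)"
  shows "\<exists>c\<ge>0. v = (- c) *\<^sub>R (t k *\<^sub>R u k)"
proof (rule nonpos_multiple_if_polar_halfspace)
  fix d assume d: "0 \<le> (t k *\<^sub>R u k) \<bullet> d"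
  have "d \<in> feasible_directions t s" unfolding feasible_directions_def
  proof (intro CollectI ballI conjI impI)
    fix j assume j: "j \<in> J"
    show "d \<bullet> u j = 0" if "t j = 0" using t(2) j that by (auto simp: zeros_def)
    show "0 \<le> t j * (d \<bullet> u j)" if "s j = 0 \<and> t j \<noteq> 0"
      using s(2) j that d by (auto simp: zeros_def inner_commute)
  qed
  then show "v \<bullet> d \<le> 0" using v by (auto simp: polar_def)
qed

definition halfspace_inter :: "(nat \<Rightarrow> real) \<Rightarrow> (nat \<Rightarrow> real) \<Rightarrow> nat set \<Rightarrow> 'a set" where
  "halfspace_inter a t K = {x. \<forall>j\<in>K. 0 \<le> t j * (u j \<bullet> x - a j)}"

lemma face_chamber_eq_halfspace_inter:
  assumes "t \<in> covectors a" "zeros t = {}"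
  shows "face a t = halfspace_inter a t J"
  using assms face_eq_closed_cell by (auto simp: closed_cell_def halfspace_inter_def zeros_def)

lemma exists_irredundant_halfspace_inter:
  assumes "halfspace_inter a t J = P"
  obtains K where "K \<subseteq> J" "halfspace_inter a t K = P"
    and "\<And>k. k \<in> K \<Longrightarrow> halfspace_inter a t (K - {k}) \<noteq> P"
proof -
  have J: "J \<subseteq> J \<and> halfspace_inter a t J = P" using assms by simp
  obtain K where K: "K \<subseteq> J \<and> halfspace_inter a t K = P"
    and K_min: "\<forall>K'. K' \<subseteq> J \<and> halfspace_inter a t K' = P \<longrightarrow> card K \<le> card K'"
    using ex_has_least_nat[where P = "\<lambda>K. K \<subseteq> J \<and> halfspace_inter a t K = P" and m = card, OF J]
    by blast
  have "halfspace_inter a t (K - {k}) \<noteq> P" if k: "k \<in> K" for k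
  proof
    assume "halfspace_inter a t (K - {k}) = P"
    then have "card K \<le> card (K - {k})" using K K_min[rule_format, of "K - {k}"] by auto
    moreover have "card (K - {k}) < card K"
      using k K finite_J by (meson card_Diff1_less finite_subset)
    ultimately show False by simp
  qed
  then show ?thesis using that K by blast
qed

lemma exists_point_on_hyperplane_between:
  assumes x: "0 < t k * (u k \<bullet> x - a k)" "\<And>j. j \<in> K \<Longrightarrow> 0 < t j * (u j \<bullet> x - a j)"
    and w: "t k * (u k \<bullet> w - a k) < 0" "\<And>j. j \<in> K \<Longrightarrow> 0 \<le> t j * (u j \<bullet> w - a j)"
  obtains z where "u k \<bullet> z = a k" "\<And>j. j \<in> K \<Longrightarrow> 0 < t j * (u j \<bullet> z - a j)"
proof -
  define f where "f j y = t j * (u j \<bullet> y - a j)" for j y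
  define l where "l = f k x / (f k x - f k w)"
  have l: "0 < l" "l < 1" using x(1) w(1) by (auto simp: l_def f_def field_simps)
  define z where "z = x + l *\<^sub>R (w - x)"
  have fz: "f j z = (1 - l) * f j x + l * f j w" for j
    by (simp add: f_def z_def inner_add_right inner_diff_right algebra_simps)
  have "f k x - f k w \<noteq> 0" using x(1) w(1) unfolding f_def by linarith
  have "f k z = f k x - l * (f k x - f k w)" by (simp add: fz algebra_simps)
  also have "\<dots> = 0" using \<open>f k x - f k w \<noteq> 0\<close> by (simp add: l_def)
  finally have "f k z = 0" .
  then have "u k \<bullet> z = a k" using x(1) by (auto simp: f_def)
  moreover have "0 < f j z" if "j \<in> K" for j
    using x(2)[OF that] w(2)[OF that] l unfolding fz by (simp add: f_def add_pos_nonneg)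
  ultimately show ?thesis using that by (auto simp: f_def)
qed

lemma sign_vector_hyperplanes_eq_iff:
  "sign_vector (hyperplanes a) x = sign_vector (hyperplanes a) y \<longleftrightarrow> signs a x = signs a y"
proof
  assume h: "sign_vector (hyperplanes a) x = sign_vector (hyperplanes a) y"
  have "signs a x j = signs a y j" for j
    using fun_cong[OF h, of "(u j, a j)"]
    by (cases "j \<in> J") (simp_all add: signs_def sign_vector_def hyperplanes_def)
  then show "signs a x = signs a y" by blast
next
  assume h: "signs a x = signs a y"
  have "sgn (u j \<bullet> x - a j) = sgn (u j \<bullet> y - a j)" if "j \<in> J" for j
    using that fun_cong[OF h, of j] by (simp add: signs_def)
  then show "sign_vector (hyperplanes a) x = sign_vector (hyperplanes a) y"
    unfolding sign_vector_def hyperplanes_def by (intro ext) auto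
qed

lemma arr_faces_hyperplanes: "arr_faces (hyperplanes a) = face a ` covectors a"
proof -
  have "{y. sign_vector (hyperplanes a) y = sign_vector (hyperplanes a) x} = cell a (signs a x)" for x
    by (simp add: sign_vector_hyperplanes_eq_iff cell_def)
  moreover have "arr_faces (hyperplanes a) =
      {closure {y. sign_vector (hyperplanes a) y = sign_vector (hyperplanes a) x} | x. True}"
    unfolding arr_faces_def by blast
  ultimately show ?thesis by (auto simp: covectors_def face_def)
qed

lemma arr_normally_equivalent_if_covectors_eq:
  assumes eq: "covectors a = covectors b"
  shows "arr_normally_equivalent (hyperplanes a) (hyperplanes b)"
proof -
  define \<Psi> where "\<Psi> = face b \<circ> the_inv_into (covectors a) (face a)"
  have \<Psi>: "\<Psi> (face a s) = face b s" if "s \<in> covectors a" for s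
    using that inj_on_face by (simp add: \<Psi>_def the_inv_into_f_f)
  have "bij_betw (the_inv_into (covectors a) (face a)) (face a ` covectors a) (covectors a)"
    by (simp add: bij_betw_the_inv_into bij_betw_imageI inj_on_face)
  moreover have "bij_betw (face b) (covectors a) (face b ` covectors b)"
    using eq inj_on_face[of b] by (simp add: bij_betw_def)
  ultimately have "bij_betw \<Psi> (face a ` covectors a) (face b ` covectors b)"
    unfolding \<Psi>_def by (rule bij_betw_trans)
  moreover have "\<Psi> F \<subseteq> \<Psi> G"
    if F: "F \<in> face a ` covectors a" and G: "G \<in> face a ` covectors a" and FG: "F \<subseteq> G" for F G
  proof -
    obtain s r where s: "s \<in> covectors a" "F = face a s" and r: "r \<in> covectors a" "G = face a r"
      using F G by blast
    then have "sign_le s r" using face_subset_face_iff FG by blast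
    then show ?thesis using s r \<Psi> eq face_subset_face_iff[of s b r] by simp
  qed
  moreover have "normally_equivalent F (\<Psi> F)" if "F \<in> face a ` covectors a" for F
    using that \<Psi> eq by (auto simp: normally_equivalent_def normal_fan_face)
  ultimately show ?thesis
    unfolding arr_normally_equivalent_def arr_faces_hyperplanes by blast
qed

lemma face_equivalence_if_arr_normally_equivalent:
  assumes "arr_normally_equivalent (hyperplanes a) (hyperplanes b)"
  obtains \<pi> where "bij_betw \<pi> (covectors a) (covectors b)"
    and "\<And>s r. s \<in> covectors a \<Longrightarrow> r \<in> covectors a \<Longrightarrow> sign_le s r \<Longrightarrow> sign_le (\<pi> s) (\<pi> r)"
    and "\<And>s. s \<in> covectors a \<Longrightarrow> normal_fan (face a s) = normal_fan (face b (\<pi> s))"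
proof -
  obtain \<Psi> where \<Psi>: "bij_betw \<Psi> (face a ` covectors a) (face b ` covectors b)"
    and mono: "\<forall>F\<in>face a ` covectors a. \<forall>G\<in>face a ` covectors a. F \<subseteq> G \<longrightarrow> \<Psi> F \<subseteq> \<Psi> G"
    and fan: "\<forall>F\<in>face a ` covectors a. normally_equivalent F (\<Psi> F)"
    using assms unfolding arr_normally_equivalent_def arr_faces_hyperplanes by (elim exE conjE)
  define \<pi> where "\<pi> = the_inv_into (covectors b) (face b) \<circ> \<Psi> \<circ> face a"
  have "bij_betw (face a) (covectors a) (face a ` covectors a)"
    using inj_on_face by (simp add: bij_betw_def)
  moreover have "bij_betw (the_inv_into (covectors b) (face b)) (face b ` covectors b) (covectors b)"
    by (simp add: bij_betw_the_inv_into bij_betw_imageI inj_on_face)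
  ultimately have bij: "bij_betw \<pi> (covectors a) (covectors b)"
    unfolding \<pi>_def using \<Psi> by (metis bij_betw_trans)
  have face_\<pi>: "face b (\<pi> s) = \<Psi> (face a s)" if "s \<in> covectors a" for s
  proof -
    have "\<Psi> (face a s) \<in> face b ` covectors b" using \<Psi> that by (auto simp: bij_betw_def)
    then show ?thesis unfolding \<pi>_def using inj_on_face by (simp add: f_the_inv_into_f)
  qed
  show ?thesis
  proof (rule that[OF bij])
    fix s r assume s: "s \<in> covectors a" and r: "r \<in> covectors a" and "sign_le s r"
    then have "face a s \<subseteq> face a r" using face_subset_face_iff by blast
    then have "\<Psi> (face a s) \<subseteq> \<Psi> (face a r)" using mono s r by blast
    then have "face b (\<pi> s) \<subseteq> face b (\<pi> r)" using face_\<pi> s r by simp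
    then show "sign_le (\<pi> s) (\<pi> r)"
      using face_subset_face_iff bij_betwE[OF bij] s r by blast
  next
    fix s assume "s \<in> covectors a"
    then show "normal_fan (face a s) = normal_fan (face b (\<pi> s))"
      using fan face_\<pi> by (simp add: normally_equivalent_def)
  qed
qed

lemma finite_covectors: "finite (covectors a)"
proof -
  have "inj_on (\<lambda>s. restrict s J) (covectors a)"
    by (intro inj_onI ext) (metis covectors_outside restrict_apply')
  moreover have "(\<lambda>s. restrict s J) ` covectors a \<subseteq> PiE J (\<lambda>_. {-1, 0, 1})"
    using covectors_values by (fastforce simp: PiE_def)
  moreover have "finite (PiE J (\<lambda>_. {-1, 0, 1::real}))"
    using finite_J by (simp add: finite_PiE)
  ultimately show ?thesis using finite_imageD finite_subset by metis
qed

lemma covectors_subfamily: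
  assumes "J' \<subseteq> J"
  shows "hyperplane_family.covectors u J' a = (\<lambda>s j. if j \<in> J' then s j else 0) ` covectors a"
proof -
  interpret sub: hyperplane_family u J' using assms finite_J finite_subset by unfold_locales blast
  have "sub.signs a x = (\<lambda>j. if j \<in> J' then signs a x j else 0)" for x
    using assms by (intro ext) (auto simp: sub.signs_def signs_def)
  then show ?thesis by (auto simp: sub.covectors_def covectors_def)
qed

end

section \<open>Chambers and facets\<close>

locale nonparallel_family = hyperplane_family +
  assumes nonzero: "\<And>j. j \<in> J \<Longrightarrow> u j \<noteq> 0"
    and nonparallel: "\<And>j k c. j \<in> J \<Longrightarrow> k \<in> J \<Longrightarrow> j \<noteq> k \<Longrightarrow> u j \<noteq> c *\<^sub>R u k"
begin

lemma signs_scaled_normal: "j \<in> J \<Longrightarrow> c = 1 \<or> c = -1 \<Longrightarrow> signs (\<lambda>_. 0) (c *\<^sub>R u j) j = c"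
  using nonzero[of j] by (auto simp: signs_def)

lemma exists_generic_direction: "\<exists>d. \<forall>j\<in>J. d \<bullet> u j \<noteq> 0"
proof -
  have "\<exists>e. e \<bullet> 0 = 0 \<and> e \<bullet> w \<noteq> 0" if "w \<in> u ` J" for w
    using that nonzero by (intro exI[of _ w]) auto
  then show ?thesis using exists_orthogonal_avoiding[of "u ` J" 0] finite_J by auto
qed

lemma exists_generic_direction_orthogonal:
  assumes k: "k \<in> J"
  shows "\<exists>d. d \<bullet> u k = 0 \<and> (\<forall>j\<in>J - {k}. d \<bullet> u j \<noteq> 0)"
proof -
  have "\<exists>e. e \<bullet> u k = 0 \<and> e \<bullet> u j \<noteq> 0" if j: "j \<in> J - {k}" for j
  proof -
    \<comment> \<open>the component of u j orthogonal to u k, nonzero since u j is not parallel to u k\<close>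
    define e where "e = u j - ((u j \<bullet> u k) / (u k \<bullet> u k)) *\<^sub>R u k"
    have ek: "e \<bullet> u k = 0" using nonzero[OF k] by (simp add: e_def inner_diff_left)
    moreover have "e \<noteq> 0" using nonparallel[of j k] j k by (auto simp: e_def)
    moreover have "e \<bullet> u j = e \<bullet> e"
      using ek by (simp add: e_def inner_diff_right inner_commute)
    ultimately show ?thesis by auto
  qed
  then show ?thesis
    using exists_orthogonal_avoiding[of "u ` (J - {k})" "u k"] finite_J by auto
qed

lemma exists_facet: assumes k: "k \<in> J" shows "\<exists>s\<in>covectors a. zeros s = {k}"
proof -
  define z where "z = (a k / (u k \<bullet> u k)) *\<^sub>R u k"
  have "u k \<bullet> z = a k" using nonzero[OF k] by (simp add: z_def)
  then have "signs a z k = 0" using k by (simp add: signs_eq_zero_iff)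
  obtain d where "d \<bullet> u k = 0" "\<forall>j\<in>J - {k}. d \<bullet> u j \<noteq> 0"
    using exists_generic_direction_orthogonal[OF k] by blast
  moreover obtain e where "signs a (z + e *\<^sub>R d) = compose_signs (signs a z) (signs (\<lambda>_. 0) d)"
    using exists_signs_perturb by blast
  ultimately have "zeros (signs a (z + e *\<^sub>R d)) = {k}"
    using k \<open>signs a z k = 0\<close>
    by (auto simp: zeros_def compose_signs_def signs_def inner_commute sgn_eq_0_iff)
  then show ?thesis by (metis signs_mem_covectors)
qed

lemma facet_flip_mem_covectors:
  assumes s: "s \<in> covectors a" and z: "zeros s = {k}" and c: "c = 1 \<or> c = -1"
  shows "s(k := c) \<in> covectors a"
proof -
  obtain x where x: "signs a x = s" using s by (auto simp: covectors_def)
  have k: "k \<in> J" "s k = 0" using z by (auto simp: zeros_def)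
  obtain e where e: "signs a (x + e *\<^sub>R (c *\<^sub>R u k)) = compose_signs s (signs (\<lambda>_. 0) (c *\<^sub>R u k))"
    using exists_signs_perturb x by blast
  have "compose_signs s (signs (\<lambda>_. 0) (c *\<^sub>R u k)) = s(k := c)"
    using z k covectors_outside[OF s] signs_scaled_normal[OF k(1) c]
    by (intro ext) (auto simp: compose_signs_def zeros_def signs_def)
  then show ?thesis using e by (metis signs_mem_covectors)
qed

lemma exists_chamber_above:
  assumes s: "s \<in> covectors a"
  obtains t where "t \<in> covectors a" "zeros t = {}" "sign_le s t"
proof -
  obtain x where x: "signs a x = s" using s by (auto simp: covectors_def)
  obtain d where d: "\<forall>j\<in>J. d \<bullet> u j \<noteq> 0" using exists_generic_direction by blast
  obtain e where e: "signs a (x + e *\<^sub>R d) = compose_signs s (signs (\<lambda>_. 0) d)"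
    using exists_signs_perturb x by blast
  have "zeros (signs a (x + e *\<^sub>R d)) = {}"
    using d unfolding e by (auto simp: zeros_def compose_signs_def signs_def inner_commute sgn_eq_0_iff)
  then show ?thesis using that e sign_le_compose_signs by (metis signs_mem_covectors)
qed

lemma exists_chamber_above_with_sign:
  assumes s: "s \<in> covectors a" and j: "j \<in> J" "s j = 0" and c: "c = 1 \<or> c = -1"
  obtains t where "t \<in> covectors a" "zeros t = {}" "sign_le s t" "t j = c"
proof -
  obtain x where x: "signs a x = s" using s by (auto simp: covectors_def)
  obtain e where e: "signs a (x + e *\<^sub>R (c *\<^sub>R u j)) = compose_signs s (signs (\<lambda>_. 0) (c *\<^sub>R u j))"
    (is "?s1 = _")
    using exists_signs_perturb x by blast
  have s1: "sign_le s ?s1" "?s1 j = c"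
    using e j signs_scaled_normal[OF j(1) c] sign_le_compose_signs by (auto simp: compose_signs_def)
  obtain t where t: "t \<in> covectors a" "zeros t = {}" "sign_le ?s1 t"
    using exists_chamber_above signs_mem_covectors by blast
  have "t j = c" using t(3) s1(2) c unfolding sign_le_def by (metis zero_neq_neg_one zero_neq_one)
  then show ?thesis using that t sign_le_trans[OF s1(1) t(3)] by blast
qed

lemma chamber_above_facet:
  assumes t: "t \<in> covectors a" "zeros t = {}" and r: "r \<in> covectors a" "sign_le r t" "zeros r = {k}"
  shows "\<And>j. j \<noteq> k \<Longrightarrow> t j = r j" and "t k = 1 \<or> t k = -1"
proof -
  have k: "k \<in> J" using r(3) by (auto simp: zeros_def)
  show "t j = r j" if "j \<noteq> k" for j
    using that r(2,3) covectors_outside[OF t(1)] covectors_outside[OF r(1)]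
    by (cases "j \<in> J") (auto simp: zeros_def sign_le_def)
  show "t k = 1 \<or> t k = -1" using t k covectors_nonzero by (auto simp: zeros_def)
qed

lemma exists_facet_through:
  assumes t: "t \<in> covectors a" "zeros t = {}"
    and K: "K \<subseteq> J" "halfspace_inter a t K = face a t" and k: "k \<in> K"
    and z: "u k \<bullet> z = a k" "\<And>j. j \<in> K - {k} \<Longrightarrow> 0 < t j * (u j \<bullet> z - a j)"
  shows "\<exists>s\<in>covectors a. sign_le s t \<and> zeros s = {k}"
proof -
  have kJ: "k \<in> J" using k K by blast
  have t_pm: "t j = 1 \<or> t j = -1" if "j \<in> J" for j
    using t that covectors_nonzero by (auto simp: zeros_def)
  obtain d where d: "d \<bullet> u k = 0" "\<forall>j\<in>J - {k}. d \<bullet> u j \<noteq> 0"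
    using exists_generic_direction_orthogonal[OF kJ] by blast
  obtain e where e: "signs a (z + e *\<^sub>R d) = compose_signs (signs a z) (signs (\<lambda>_. 0) d)"
    using exists_signs_perturb by blast
  define p where "p = z + e *\<^sub>R d"
  have zk: "signs a z k = 0" using z(1) kJ by (simp add: signs_eq_zero_iff)
  have "zeros (signs a p) = {k}"
    using d kJ zk unfolding p_def e
    by (auto simp: zeros_def compose_signs_def signs_def inner_commute sgn_eq_0_iff)
  moreover have "p \<in> halfspace_inter a t K" unfolding halfspace_inter_def
  proof (intro CollectI ballI)
    fix j assume j: "j \<in> K"
    show "0 \<le> t j * (u j \<bullet> p - a j)"
    proof (cases "j = k")
      case True
      then show ?thesis using d z(1) by (simp add: p_def inner_add_right inner_commute)
    next
      case False
      have jJ: "j \<in> J" using j K by blast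
      then have "signs a z j = t j"
        using z(2) j False t_pm signs_eq_pm_iff by blast
      then have "signs a p j = t j"
        using jJ t(2) unfolding p_def e by (auto simp: compose_signs_def zeros_def)
      then show ?thesis using jJ t_pm signs_eq_pm_iff by (metis less_eq_real_def)
    qed
  qed
  then have "sign_le (signs a p) t" using K(2) mem_face_iff[OF t(1)] by simp
  ultimately show ?thesis by (metis signs_mem_covectors)
qed

lemma exists_separating_facet:
  assumes t: "t \<in> covectors a" "zeros t = {}" and t': "t' \<in> covectors a" "zeros t' = {}"
    and ne: "t \<noteq> t'"
  shows "\<exists>k s. s \<in> covectors a \<and> sign_le s t \<and> zeros s = {k} \<and> t' k = - t k"
proof -
  obtain K where K: "K \<subseteq> J" "halfspace_inter a t K = face a t"
    and irredundant: "\<And>k. k \<in> K \<Longrightarrow> halfspace_inter a t (K - {k}) \<noteq> face a t"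
    using exists_irredundant_halfspace_inter[OF face_chamber_eq_halfspace_inter[OF t, symmetric]]
    by blast
  have t_pm: "t j = 1 \<or> t j = -1" if "j \<in> J" for j
    using t that covectors_nonzero by (auto simp: zeros_def)
  obtain y where y: "signs a y = t'" using t' by (auto simp: covectors_def)
  have "\<not> sign_le t' t" using sign_le_eq_if_zeros_eq[OF t'(1) t(1) _ sign_le_refl] t(2) t'(2) ne by auto
  then have "y \<notin> halfspace_inter a t K" using K(2) mem_face_iff[OF t(1)] y by simp
  then obtain k where k: "k \<in> K" and yk: "t k * (u k \<bullet> y - a k) < 0"
    by (auto simp: halfspace_inter_def not_le)
  have kJ: "k \<in> J" using k K by blast
  have "t' k = - t k"
    using y yk t_pm[OF kJ] signs_eq_pm_iff[OF kJ, of "- t k" a y] by (auto simp: algebra_simps)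
  obtain w where w: "w \<in> halfspace_inter a t (K - {k})" "w \<notin> halfspace_inter a t K"
    using irredundant[OF k] K(2) by (auto simp: halfspace_inter_def)
  have wk: "t k * (u k \<bullet> w - a k) < 0"
  proof (rule ccontr)
    assume "\<not> ?thesis"
    then have "w \<in> halfspace_inter a t K" using w(1) by (auto simp: halfspace_inter_def)
    then show False using w(2) by simp
  qed
  obtain x where "signs a x = t" using t(1) by (auto simp: covectors_def)
  then have x_pos: "0 < t j * (u j \<bullet> x - a j)" if "j \<in> J" for j
    using that t_pm signs_eq_pm_iff by blast
  obtain z where "u k \<bullet> z = a k" "\<And>j. j \<in> K - {k} \<Longrightarrow> 0 < t j * (u j \<bullet> z - a j)"
  proof (rule exists_point_on_hyperplane_between[of t k x a "K - {k}" w])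
  qed (use x_pos kJ K(1) wk w(1) in \<open>auto simp: halfspace_inter_def\<close>)
  then show ?thesis
    using exists_facet_through[OF t K k] \<open>t' k = - t k\<close> by blast
qed

lemma zeros_empty_iff_polar:
  assumes "s \<in> covectors a"
  shows "zeros s = {} \<longleftrightarrow> polar (feasible_directions s s) = {0}"
proof
  assume "zeros s = {}"
  then show "polar (feasible_directions s s) = {0}" using feasible_directions_chamber polar_UNIV by simp
next
  assume h: "polar (feasible_directions s s) = {0}"
  show "zeros s = {}"
  proof (rule ccontr)
    assume "zeros s \<noteq> {}"
    then obtain j where "j \<in> J" "s j = 0" by (auto simp: zeros_def)
    then show False using normal_mem_polar[of j s s] h nonzero by auto
  qed
qed

lemma covector_eq_if_chambers_above_eq:
  assumes s: "s \<in> covectors a" and r: "r \<in> covectors b"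
    and above_eq: "chambers_above a s = chambers_above b r"
  shows "s = r"
proof
  note eq = above_eq[unfolded chambers_above_def]
  fix j
  show "s j = r j"
  proof (cases "j \<in> J")
    case False
    then show ?thesis using covectors_outside[OF s] covectors_outside[OF r] by simp
  next
    case j: True
    show ?thesis
    proof (cases "s j = 0")
      case True
      obtain t1 where "t1 \<in> covectors a" "zeros t1 = {}" "sign_le s t1" "t1 j = 1"
        using exists_chamber_above_with_sign[OF s j True] by blast
      moreover obtain t2 where "t2 \<in> covectors a" "zeros t2 = {}" "sign_le s t2" "t2 j = -1"
        using exists_chamber_above_with_sign[OF s j True] by blast
      ultimately have "sign_le r t1" "sign_le r t2" "t1 j \<noteq> t2 j" using eq by auto
      then have "r j = 0" unfolding sign_le_def by metis
      then show ?thesis using True by simp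
    next
      case False
      have "r j \<noteq> 0"
      proof
        assume rj: "r j = 0"
        obtain t where "t \<in> covectors b" "zeros t = {}" "sign_le r t" "t j = - s j"
          using exists_chamber_above_with_sign[OF r j rj, of "- s j"] covectors_nonzero[OF s False]
          by auto
        then have "sign_le s t" using eq by blast
        then show False using \<open>t j = - s j\<close> False unfolding sign_le_def by (metis neg_equal_zero)
      qed
      obtain t where "t \<in> covectors a" "zeros t = {}" "sign_le s t"
        using exists_chamber_above[OF s] by blast
      then have "sign_le r t" using eq by blast
      then show ?thesis using \<open>sign_le s t\<close> False \<open>r j \<noteq> 0\<close> unfolding sign_le_def by metis
    qed
  qed
qed

end

section \<open>Normally equivalent arrangements have the same covectors\<close>

locale face_equivalence = nonparallel_family +
  fixes a b :: "nat \<Rightarrow> real" and \<pi> :: "(nat \<Rightarrow> real) \<Rightarrow> nat \<Rightarrow> real"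
  assumes bij: "bij_betw \<pi> (covectors a) (covectors b)"
    and mono: "\<And>s r. s \<in> covectors a \<Longrightarrow> r \<in> covectors a \<Longrightarrow> sign_le s r \<Longrightarrow> sign_le (\<pi> s) (\<pi> r)"
    and fan: "\<And>s. s \<in> covectors a \<Longrightarrow> normal_fan (face a s) = normal_fan (face b (\<pi> s))"
begin

lemma map_mem_covectors: "s \<in> covectors a \<Longrightarrow> \<pi> s \<in> covectors b"
  using bij by (auto simp: bij_betw_def)

lemma map_inj: "s \<in> covectors a \<Longrightarrow> s' \<in> covectors a \<Longrightarrow> \<pi> s = \<pi> s' \<Longrightarrow> s = s'"
  using bij by (auto simp: bij_betw_def inj_on_def)

lemma polar_map: "s \<in> covectors a \<Longrightarrow> polar (feasible_directions (\<pi> s) (\<pi> s)) = polar (feasible_directions s s)"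
  using Inter_normal_fan_face map_mem_covectors fan by metis

lemma map_chamber_iff: "s \<in> covectors a \<Longrightarrow> zeros (\<pi> s) = {} \<longleftrightarrow> zeros s = {}"
  using zeros_empty_iff_polar polar_map map_mem_covectors by metis

lemma zeros_map_facet:
  assumes s: "s \<in> covectors a" and z: "zeros s = {k}"
  shows "zeros (\<pi> s) = {k}"
proof -
  have "zeros (\<pi> s) \<subseteq> {k}"
  proof
    fix j assume j: "j \<in> zeros (\<pi> s)"
    then have "u j \<in> polar (feasible_directions s s)"
      using normal_mem_polar polar_map[OF s] by (auto simp: zeros_def)
    then obtain c where "u j = c *\<^sub>R u k" using polar_facet_parallel[OF z] by blast
    moreover have "j \<in> J" "k \<in> J" using j z by (auto simp: zeros_def)
    ultimately show "j \<in> {k}" using nonparallel by blast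
  qed
  moreover have "zeros (\<pi> s) \<noteq> {}" using map_chamber_iff[OF s] z by simp
  ultimately show ?thesis by blast
qed

definition flips :: "(nat \<Rightarrow> real) \<Rightarrow> nat set" where
  "flips t = {j\<in>J. \<pi> t j \<noteq> t j}"

lemma map_chamber_above_facet:
  assumes s: "s \<in> covectors a" "zeros s = {k}" and c: "c = 1 \<or> c = -1"
  shows "s(k := c) \<in> covectors a" "zeros (s(k := c)) = {}"
    and "\<And>j. j \<noteq> k \<Longrightarrow> \<pi> (s(k := c)) j = \<pi> s j" "\<pi> (s(k := c)) k = 1 \<or> \<pi> (s(k := c)) k = -1"
proof -
  show t: "s(k := c) \<in> covectors a" using facet_flip_mem_covectors[OF s c] .
  show z: "zeros (s(k := c)) = {}" using s(2) c by (auto simp: zeros_def)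
  have "sign_le s (s(k := c))" using s(2) by (auto simp: sign_le_def zeros_def)
  then have le: "sign_le (\<pi> s) (\<pi> (s(k := c)))" using mono[OF s(1) t] by blast
  have t': "\<pi> (s(k := c)) \<in> covectors b" "zeros (\<pi> (s(k := c))) = {}"
    using map_mem_covectors[OF t] map_chamber_iff[OF t] z by auto
  note above = chamber_above_facet[OF t' map_mem_covectors[OF s(1)] le zeros_map_facet[OF s]]
  show "\<pi> (s(k := c)) j = \<pi> s j" if "j \<noteq> k" for j using above(1)[OF that] .
  show "\<pi> (s(k := c)) k = 1 \<or> \<pi> (s(k := c)) k = -1" using above(2) .
qed

text \<open>The two chambers on either side of a facet are mapped to the two chambers on either side of
  its image, so crossing a facet does not change the set of flipped coordinates.\<close>
lemma flips_across_facet: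
  assumes s: "s \<in> covectors a" "zeros s = {k}"
  shows "flips (s(k := 1)) = flips (s(k := -1))"
proof -
  note p = map_chamber_above_facet[OF s, of 1] map_chamber_above_facet[OF s, of "-1"]
  have "s(k := 1) \<noteq> s(k := -1)" by (metis fun_upd_same one_neq_neg_one)
  then have "\<pi> (s(k := 1)) \<noteq> \<pi> (s(k := -1))" using map_inj p(1,5) by blast
  then have "\<pi> (s(k := 1)) k \<noteq> \<pi> (s(k := -1)) k" using p(3,7) by force
  then have "\<pi> (s(k := 1)) k = - \<pi> (s(k := -1)) k" using p(4,8) by auto
  then show ?thesis using p(3,4,7,8) by (auto simp: flips_def)
qed

lemma map_chamber_sign_at_facet:
  assumes t: "t \<in> covectors a" "zeros t = {}" and s: "s \<in> covectors a" "sign_le s t" "zeros s = {k}"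
  shows "\<pi> t k = t k"
proof -
  have t': "\<pi> t \<in> covectors b" "zeros (\<pi> t) = {}" using map_mem_covectors t map_chamber_iff by auto
  have s': "\<pi> s \<in> covectors b" "sign_le (\<pi> s) (\<pi> t)" "zeros (\<pi> s) = {k}"
    using map_mem_covectors[OF s(1)] mono[OF s(1) t(1) s(2)] zeros_map_facet[OF s(1,3)] by auto
  have k: "k \<in> J" using s(3) by (auto simp: zeros_def)
  have tk: "t k = 1 \<or> t k = -1" and tk': "\<pi> t k = 1 \<or> \<pi> t k = -1"
    using t t' k covectors_nonzero by (auto simp: zeros_def)
  \<comment> \<open>the normal cone of face b (\<pi> t) along its facet \<pi> s is also a normal cone of face a t along some face r\<close>
  define E where "E = polar (feasible_directions (\<pi> t) (\<pi> s))"
  have "E \<in> normal_fan (face a t)" unfolding E_def fan[OF t(1)] normal_fan_face[OF t'(1)] using s' by blast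
  then obtain r where r: "r \<in> covectors a" "sign_le r t" "E = polar (feasible_directions t r)"
    unfolding normal_fan_face[OF t(1)] by blast
  have "\<pi> s k = 0" using s'(3) by (auto simp: zeros_def)
  then have "(- \<pi> t k) *\<^sub>R u k \<in> E" unfolding E_def
    by (rule outer_normal_mem_polar[OF k]) (use tk' in auto)
  then have "E \<noteq> {0}" using nonzero[OF k] tk' by auto
  then have "r \<noteq> t" using r(3) feasible_directions_chamber[OF t(2)] polar_UNIV by auto
  then have "zeros r \<noteq> {}" using sign_le_eq_if_zeros_eq[OF r(1) t(1) r(2) sign_le_refl] t(2) by auto
  then obtain j where j: "j \<in> J" "r j = 0" by (auto simp: zeros_def)
  have tj: "t j \<noteq> 0" using t(2) j by (auto simp: zeros_def)
  have "(- t j) *\<^sub>R u j \<in> E" using r(3) outer_normal_mem_polar[of j r t, OF j tj] by simp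
  then obtain c where c: "c \<ge> 0" "(- t j) *\<^sub>R u j = (- c) *\<^sub>R (\<pi> t k *\<^sub>R u k)"
    using polar_facet_in_chamber_ray[OF t' s'(2,3)] unfolding E_def by blast
  then have "t j *\<^sub>R u j = (c * \<pi> t k) *\<^sub>R u k" by simp
  then have "u j = ((c * \<pi> t k) / t j) *\<^sub>R u k"
    using tj by (metis divide_inverse_commute scaleR_scaleR left_inverse scaleR_one)
  then have "j = k" using nonparallel[OF j(1) k] by blast
  then have "(t k - c * \<pi> t k) *\<^sub>R u k = 0" using c(2) by (simp add: algebra_simps)
  then have "t k = c * \<pi> t k" using nonzero[OF k] by simp
  then show ?thesis using tk tk' c(1) by auto
qed

text \<open>Walk from chamber to chamber, crossing one facet at a time.\<close>
lemma flips_eq_chambers: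
  assumes t: "t \<in> covectors a" "zeros t = {}" and t': "t' \<in> covectors a" "zeros t' = {}"
  shows "flips t = flips t'"
  using t
proof (induction "card {j\<in>J. t j \<noteq> t' j}" arbitrary: t rule: less_induct)
  case less
  show ?case
  proof (cases "t = t'")
    case False
    obtain k s where s: "s \<in> covectors a" "sign_le s t" "zeros s = {k}" and k: "t' k = - t k"
      using exists_separating_facet[OF less.prems t' False] by blast
    note above = chamber_above_facet[OF less.prems s]
    have t_eq: "t = s(k := t k)" using above(1) by auto
    define t'' where "t'' = s(k := - t k)"
    have t'': "t'' \<in> covectors a" "zeros t'' = {}"
      using map_chamber_above_facet[OF s(1,3), of "- t k"] above(2) by (auto simp: t''_def)
    have "flips t = flips t''"
      using flips_across_facet[OF s(1,3)] above(2) t_eq by (auto simp: t''_def)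
    moreover have "card {j\<in>J. t'' j \<noteq> t' j} < card {j\<in>J. t j \<noteq> t' j}"
    proof -
      have "{j\<in>J. t'' j \<noteq> t' j} = {j\<in>J. t j \<noteq> t' j} - {k}"
        using k above(1) by (auto simp: t''_def)
      moreover have "k \<in> {j\<in>J. t j \<noteq> t' j}" using k above(2) s(3) by (auto simp: zeros_def)
      moreover have "finite {j\<in>J. t j \<noteq> t' j}" using finite_J by simp
      ultimately show ?thesis by (metis card_Diff1_less)
    qed
    ultimately show ?thesis using less.hyps[OF _ t''] by simp
  qed simp
qed

lemma map_chamber:
  assumes t: "t \<in> covectors a" "zeros t = {}"
  shows "\<pi> t = t"
proof -
  have "k \<notin> flips t" if k: "k \<in> J" for k
  proof -
    obtain s where s: "s \<in> covectors a" "zeros s = {k}" using exists_facet[OF k] by blast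
    note t1 = map_chamber_above_facet[OF s, of 1]
    have "sign_le s (s(k := 1))" using s(2) by (auto simp: sign_le_def zeros_def)
    then have "k \<notin> flips (s(k := 1))"
      using map_chamber_sign_at_facet[OF t1(1,2) s(1) _ s(2)] by (simp add: flips_def)
    then show ?thesis using flips_eq_chambers[OF t1(1,2) t] by simp
  qed
  then have "\<pi> t j = t j" for j
    using covectors_outside[OF map_mem_covectors[OF t(1)]] covectors_outside[OF t(1)]
    by (cases "j \<in> J") (auto simp: flips_def)
  then show ?thesis by blast
qed

lemma chambers_eq: "{t \<in> covectors a. zeros t = {}} = {t \<in> covectors b. zeros t = {}}"
proof
  show "{t \<in> covectors a. zeros t = {}} \<subseteq> {t \<in> covectors b. zeros t = {}}"
    using map_chamber map_mem_covectors by fastforce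
  show "{t \<in> covectors b. zeros t = {}} \<subseteq> {t \<in> covectors a. zeros t = {}}"
  proof
    fix t assume t: "t \<in> {t \<in> covectors b. zeros t = {}}"
    then obtain s where s: "s \<in> covectors a" "t = \<pi> s" using bij by (auto simp: bij_betw_def)
    then have "zeros s = {}" using map_chamber_iff t by auto
    then show "t \<in> {t \<in> covectors a. zeros t = {}}" using map_chamber s by auto
  qed
qed

lemma chambers_above_map:
  assumes s: "s \<in> covectors a"
  shows "chambers_above a s \<subseteq> chambers_above b (\<pi> s)"
proof
  fix t assume "t \<in> chambers_above a s"
  then have t: "t \<in> covectors a" "zeros t = {}" "sign_le s t" by (auto simp: chambers_above_def)
  then have "sign_le (\<pi> s) t" using mono[OF s t(1) t(3)] map_chamber[OF t(1,2)] by simp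
  then show "t \<in> chambers_above b (\<pi> s)"
    using t map_chamber[OF t(1,2)] map_mem_covectors[OF t(1)] by (simp add: chambers_above_def)
qed

lemma card_faces_chamber_eq:
  assumes t: "t \<in> covectors a" "zeros t = {}"
  shows "card {s \<in> covectors a. sign_le s t} = card {r \<in> covectors b. sign_le r t}"
  using card_normal_fan_chamber[OF t] card_normal_fan_chamber[OF map_mem_covectors[OF t(1)]]
    fan[OF t(1)] map_chamber[OF t] t(2) by simp

text \<open>Both sides count the pairs (s, t) with t a chamber above s, in the arrangement a and in b;
  summed over the common chambers t they agree, because the normal fan of a chamber determines its
  number of faces.\<close>
lemma sum_card_chambers_above_map:
  "(\<Sum>s\<in>covectors a. card (chambers_above a s)) = (\<Sum>s\<in>covectors a. card (chambers_above b (\<pi> s)))"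
proof -
  define C where "C = {t \<in> covectors a. zeros t = {}}"
  have C: "finite C" using finite_covectors by (simp add: C_def)
  have above: "chambers_above a s = {t \<in> C. sign_le s t}" "chambers_above b s = {t \<in> C. sign_le s t}"
    for s using chambers_eq by (auto simp: chambers_above_def C_def)
  have "(\<Sum>s\<in>covectors a. card (chambers_above a s)) = (\<Sum>t\<in>C. card {s \<in> covectors a. sign_le s t})"
    unfolding above by (rule sum_card_filter_swap[OF finite_covectors C])
  also have "\<dots> = (\<Sum>t\<in>C. card {r \<in> covectors b. sign_le r t})"
    using card_faces_chamber_eq by (simp add: C_def)
  also have "\<dots> = (\<Sum>r\<in>covectors b. card (chambers_above b r))"
    unfolding above by (rule sum_card_filter_swap[OF finite_covectors C, symmetric])
  also have "\<dots> = (\<Sum>s\<in>covectors a. card (chambers_above b (\<pi> s)))"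
    using sum.reindex_bij_betw[OF bij, of "\<lambda>r. card (chambers_above b r)"] by simp
  finally show ?thesis .
qed

lemma covectors_eq: "covectors a = covectors b"
proof -
  have finite: "finite (chambers_above b r)" for r
    using finite_covectors by (simp add: chambers_above_def)
  have le: "card (chambers_above a s) \<le> card (chambers_above b (\<pi> s))" if "s \<in> covectors a" for s
    using chambers_above_map[OF that] finite by (rule card_mono[rotated])
  have "\<pi> s = s" if s: "s \<in> covectors a" for s
  proof -
    have "card (chambers_above a s) = card (chambers_above b (\<pi> s))"
      using sum_mono_inv[OF sum_card_chambers_above_map le s finite_covectors] by blast
    then have "chambers_above a s = chambers_above b (\<pi> s)"
      using chambers_above_map[OF s] finite by (intro card_subset_eq) auto
    then show ?thesis using covector_eq_if_chambers_above_eq[OF s map_mem_covectors[OF s]] by simp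
  qed
  then show ?thesis using bij by (auto simp: bij_betw_def image_def)
qed

end

theorem (in nonparallel_family) arr_normally_equivalent_iff_covectors_eq:
  "arr_normally_equivalent (hyperplanes a) (hyperplanes b) \<longleftrightarrow> covectors a = covectors b"
proof
  assume "arr_normally_equivalent (hyperplanes a) (hyperplanes b)"
  then obtain \<pi> where "bij_betw \<pi> (covectors a) (covectors b)"
    and "\<And>s r. s \<in> covectors a \<Longrightarrow> r \<in> covectors a \<Longrightarrow> sign_le s r \<Longrightarrow> sign_le (\<pi> s) (\<pi> r)"
    and "\<And>s. s \<in> covectors a \<Longrightarrow> normal_fan (face a s) = normal_fan (face b (\<pi> s))"
    by (erule face_equivalence_if_arr_normally_equivalent)
  then interpret face_equivalence u J a b \<pi> by unfold_locales
  show "covectors a = covectors b" by (rule covectors_eq)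
qed (rule arr_normally_equivalent_if_covectors_eq)

theorem mainTheorem17:
  fixes u :: "nat \<Rightarrow> 'a::euclidean_space" and m :: nat and a b :: "nat \<Rightarrow> real"
  assumes nonzero: "\<forall>i<m. u i \<noteq> 0"
    and nonparallel: "\<forall>i<m. \<forall>j<m. i \<noteq> j \<longrightarrow> \<not> (\<exists>c::real. u i = c *\<^sub>R u j)"
    and equiv: "arr_normally_equivalent (arrangement m u a) (arrangement m u b)"
    and i: "i < m"
  shows "arr_normally_equivalent (arrangement m u a - {(u i, a i)})
                                 (arrangement m u b - {(u i, b i)})"
proof -
  interpret all: nonparallel_family u "{..<m}"
    using nonzero nonparallel by unfold_locales auto
  interpret del: nonparallel_family u "{..<m} - {i}"
    using nonzero nonparallel by unfold_locales auto
  have "all.covectors a = all.covectors b"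
    using equiv all.arr_normally_equivalent_iff_covectors_eq
    by (simp add: arrangement_def all.hyperplanes_def)
  then have "del.covectors a = del.covectors b"
    using all.covectors_subfamily[of "{..<m} - {i}"] by auto
  then have "arr_normally_equivalent (del.hyperplanes a) (del.hyperplanes b)"
    using del.arr_normally_equivalent_iff_covectors_eq by blast
  moreover have "arrangement m u c - {(u i, c i)} = del.hyperplanes c" for c
  proof -
    have "u j \<noteq> u i" if "j < m" "j \<noteq> i" for j
      using nonparallel that i scaleR_one by metis
    then show ?thesis by (auto simp: arrangement_def del.hyperplanes_def)
  qed
  ultimately show ?thesis by simp
qed

end
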